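(* Let $n\ge 1$ and let $P_n$ be the path on $n$ vertices. Then $$v(P_n)=\begin{cases}\lfloor n/4\rfloor & \text{if } n\equiv 0,1 \pmod 4,\\ \lfloor n/4\rfloor+1 & \text{if } n\equiv 2,3 \pmod 4.\end{cases}$$
   Context: Let $K$ be a field and $S=K[x_1,\dots,x_t]$ with the standard grading. For a proper graded ideal $I\subset S$, $\operatorname{Ass}(I)$ is the set of associated primes of $S/I$, and the $v$-number of $I$ is $v(I)=\min\{k\ge 0 : \exists f\in S_k \text{ and } \mathcal P\in\operatorname{Ass}(I) \text{ with } (I:f)=\mathcal P\}$. For a finite simple graph $G$ on vertex set $\{x_1,\dots,x_t\}$, the edge ideal is $I(G)=\langle x_ix_j : \{x_i,x_j\}\text{ an edge of } G\rangle\subset S$, and $v(G):=v(I(G))$. The path $P_n$ has vertices $x_1,\dots,x_n$ and edges $\{x_i,x_{i+1}\}$ for $1\le i\le n-1$. $\lfloor\cdot\rfloor$ is the integer part. *)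

theory Defs
  imports Main "HOL-Library.Poly_Mapping"
begin

text \<open>Polynomials in countably many variables x_0, x_1, ... over a field 'a:
  maps from monomials (finitely supported exponent vectors) to coefficients.
  The ring S = K[x_1,...,x_t] is the subring of those polynomials involving only x_1..x_t.\<close>

type_synonym 'a mpol = "(nat \<Rightarrow>\<^sub>0 nat) \<Rightarrow>\<^sub>0 'a"

definition var :: "nat \<Rightarrow> 'a::comm_ring_1 mpol" where
  "var i = Poly_Mapping.single (Poly_Mapping.single i 1) 1"

definition polyring :: "nat \<Rightarrow> 'a::field mpol set" where
  "polyring t = {p :: 'a mpol. \<forall>m \<in> Poly_Mapping.keys p. Poly_Mapping.keys m \<subseteq> {1..t}}"

definition mdeg :: "(nat \<Rightarrow>\<^sub>0 nat) \<Rightarrow> nat" where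
  "mdeg m = (\<Sum>i\<in>Poly_Mapping.keys m. Poly_Mapping.lookup m i)"

definition homog_deg :: "nat \<Rightarrow> nat \<Rightarrow> 'a::field mpol set" where
  "homog_deg t k = {p \<in> polyring t. \<forall>m \<in> Poly_Mapping.keys p. mdeg m = k}"

definition ideal_gen :: "nat \<Rightarrow> 'a::field mpol set \<Rightarrow> 'a mpol set" where
  "ideal_gen t G = {p. \<exists>F c. finite F \<and> F \<subseteq> G \<and> (\<forall>g\<in>F. c g \<in> polyring t)
                          \<and> p = (\<Sum>g\<in>F. c g * g)}"

definition is_ideal :: "nat \<Rightarrow> 'a::field mpol set \<Rightarrow> bool" where
  "is_ideal t I \<longleftrightarrow> I \<subseteq> polyring t \<and> 0 \<in> I \<and> (\<forall>f\<in>I. \<forall>g\<in>I. f + g \<in> I)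
      \<and> (\<forall>f\<in>I. \<forall>r\<in>polyring t. r * f \<in> I)"

definition is_prime_ideal :: "nat \<Rightarrow> 'a::field mpol set \<Rightarrow> bool" where
  "is_prime_ideal t P \<longleftrightarrow> is_ideal t P \<and> 1 \<notin> P
      \<and> (\<forall>f\<in>polyring t. \<forall>g\<in>polyring t. f * g \<in> P \<longrightarrow> f \<in> P \<or> g \<in> P)"

definition colon :: "nat \<Rightarrow> 'a::field mpol set \<Rightarrow> 'a mpol \<Rightarrow> 'a mpol set" where
  "colon t I f = {g \<in> polyring t. g * f \<in> I}"

definition Ass :: "nat \<Rightarrow> 'a::field mpol set \<Rightarrow> 'a mpol set set" where
  "Ass t I = {P. is_prime_ideal t P \<and> (\<exists>f\<in>polyring t. colon t I f = P)}"

definition v_number :: "nat \<Rightarrow> 'a::field mpol set \<Rightarrow> nat" where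
  "v_number t I = (LEAST k. \<exists>f \<in> homog_deg t k. \<exists>P \<in> Ass t I. colon t I f = P)"

definition path_edge_ideal :: "nat \<Rightarrow> 'a::field mpol set" where
  "path_edge_ideal n = ideal_gen n {var i * var (i+1) | i. 1 \<le> i \<and> i \<le> n - 1}"

end

theory Submission
  imports Defs
begin

text \<open>The edge ideal I of P_n consists of the polynomials all of whose monomials are divisible
  by some x_j x_(j+1). Let (I : f) = P be prime, f of degree k, and let m be a monomial of f
  outside I. Every edge x_j x_(j+1) lies in P, so x_j or x_(j+1) lies in P; and x_i \<in> P forces
  a neighbour of i into the support of m, since x_i m \<in> I while m \<notin> I. Thus the neighbourhood
  of supp m covers all n - 1 edges, and as a vertex covers at most four edges through its
  neighbours, n - 1 \<le> 4 |supp m| \<le> 4k. Conversely, for the independent set S of every fourth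
  vertex (with a correction at the end), whose neighbourhood still covers all edges,
  (I : \<Prod>s\<in>S. x_s) is the prime ideal generated by the neighbours of S, and |S| = \<lfloor>(n+2)/4\<rfloor>,
  which is the claimed value.\<close>

lemma poly_mapping_expansion:
  fixes p :: "'k \<Rightarrow>\<^sub>0 'b::comm_monoid_add"
  shows "p = (\<Sum>m\<in>Poly_Mapping.keys p. Poly_Mapping.single m (Poly_Mapping.lookup p m))"
proof (rule poly_mapping_eqI)
  fix x
  show "Poly_Mapping.lookup p x =
      Poly_Mapping.lookup (\<Sum>m\<in>Poly_Mapping.keys p. Poly_Mapping.single m (Poly_Mapping.lookup p m)) x"
    by (cases "x \<in> Poly_Mapping.keys p") (auto simp: lookup_sum lookup_single when_def in_keys_iff)
qed

lemma lookup_mult_single: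
  fixes p :: "'k::cancel_comm_monoid_add \<Rightarrow>\<^sub>0 'b::comm_semiring_1"
  shows "Poly_Mapping.lookup (p * Poly_Mapping.single e c) (m + e) = Poly_Mapping.lookup p m * c"
proof -
  have "(\<Sum>q. (c when e = q) when m + e = l + q) = (c when m + e = l + e)" for l
    by (subst when_commute) (rule Sum_any_when_equal')
  then have "Poly_Mapping.lookup (p * Poly_Mapping.single e c) (m + e)
      = (\<Sum>l. Poly_Mapping.lookup p l * c when l = m)"
    by (simp add: lookup_mult lookup_single mult_when)
  then show ?thesis by simp
qed

lemma keys_mult_single:
  fixes p :: "'k::cancel_comm_monoid_add \<Rightarrow>\<^sub>0 'b::comm_semiring_1"
  shows "Poly_Mapping.keys (p * Poly_Mapping.single e 1) = (\<lambda>m. m + e) ` Poly_Mapping.keys p"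
proof
  show "Poly_Mapping.keys (p * Poly_Mapping.single e 1) \<subseteq> (\<lambda>m. m + e) ` Poly_Mapping.keys p"
    using keys_mult[of p "Poly_Mapping.single e 1"] by auto
  show "(\<lambda>m. m + e) ` Poly_Mapping.keys p \<subseteq> Poly_Mapping.keys (p * Poly_Mapping.single e 1)"
    by (auto simp: in_keys_iff lookup_mult_single)
qed

lemma keys_add_nat:
  fixes a b :: "'k \<Rightarrow>\<^sub>0 nat"
  shows "Poly_Mapping.keys (a + b) = Poly_Mapping.keys a \<union> Poly_Mapping.keys b"
  by (auto simp: in_keys_iff lookup_add)

lemma polyring_zero: "0 \<in> polyring n"
  unfolding polyring_def by simp

lemma polyring_add: "p \<in> polyring n \<Longrightarrow> q \<in> polyring n \<Longrightarrow> p + q \<in> polyring n"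
  unfolding polyring_def using keys_add[of p q] by auto

lemma polyring_mult: "p \<in> polyring n \<Longrightarrow> q \<in> polyring n \<Longrightarrow> p * q \<in> polyring n"
  unfolding polyring_def using keys_mult[of p q] by (force simp: keys_add_nat)

lemma polyring_one: "1 \<in> polyring n"
  unfolding polyring_def by simp

lemma single_in_polyring: "Poly_Mapping.keys m \<subseteq> {1..n} \<Longrightarrow> Poly_Mapping.single m c \<in> polyring n"
  unfolding polyring_def by simp

lemma var_in_polyring: "1 \<le> i \<Longrightarrow> i \<le> n \<Longrightarrow> (var i :: 'a::field mpol) \<in> polyring n"
  unfolding var_def by (rule single_in_polyring) simp

definition set_monomial :: "nat set \<Rightarrow> (nat \<Rightarrow>\<^sub>0 nat)" where
  "set_monomial S = (\<Sum>s\<in>S. Poly_Mapping.single s 1)"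

lemma lookup_set_monomial:
  "finite S \<Longrightarrow> Poly_Mapping.lookup (set_monomial S) i = (if i \<in> S then 1 else 0)"
  unfolding set_monomial_def by (simp add: lookup_sum lookup_single when_def)

lemma keys_set_monomial: "finite S \<Longrightarrow> Poly_Mapping.keys (set_monomial S) = S"
  by (simp add: set_eq_iff in_keys_iff lookup_set_monomial)

lemma mdeg_set_monomial: "finite S \<Longrightarrow> mdeg (set_monomial S) = card S"
  unfolding mdeg_def by (simp add: keys_set_monomial lookup_set_monomial)

lemma prod_var:
  "finite S \<Longrightarrow> (\<Prod>s\<in>S. var s :: 'a::field mpol) = Poly_Mapping.single (set_monomial S) 1"
  unfolding set_monomial_def
  by (induction S rule: finite_induct) (simp_all add: var_def mult_single add.commute)

lemma prod_var_in_homog_deg: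
  assumes "S \<subseteq> {1..n}"
  shows "(\<Prod>s\<in>S. var s :: 'a::field mpol) \<in> homog_deg n (card S)"
proof -
  have "finite S" using assms by (rule finite_subset) simp
  with assms show ?thesis
    unfolding homog_deg_def
    by (simp add: prod_var single_in_polyring keys_set_monomial mdeg_set_monomial)
qed

lemma card_keys_le_mdeg: "card (Poly_Mapping.keys m) \<le> mdeg m"
  unfolding mdeg_def using sum_mono[of "Poly_Mapping.keys m" "\<lambda>_. 1::nat" "Poly_Mapping.lookup m"]
  by (simp add: in_keys_iff Suc_le_eq)

section \<open>Ideals generated by monomials\<close>

lemma is_ideal_sum:
  "is_ideal n J \<Longrightarrow> (\<And>x. x \<in> X \<Longrightarrow> f x \<in> J) \<Longrightarrow> sum f X \<in> J"
  unfolding is_ideal_def by (induction X rule: infinite_finite_induct) auto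

lemma is_ideal_diff:
  assumes "is_ideal n J" "f \<in> J" "g \<in> J"
  shows "f - g \<in> J"
proof -
  have "- 1 \<in> polyring n" unfolding polyring_def by simp
  with assms have "f + (- 1) * g \<in> J" unfolding is_ideal_def by blast
  then show ?thesis by simp
qed

lemma mult_mem_ideal_gen: "r \<in> polyring n \<Longrightarrow> g \<in> G \<Longrightarrow> r * g \<in> ideal_gen n G"
  unfolding ideal_gen_def by (intro CollectI exI[of _ "{g}"] exI[of _ "\<lambda>_. r"]) auto

lemma ideal_gen_add:
  assumes "p \<in> ideal_gen n G" "q \<in> ideal_gen n G"
  shows "p + q \<in> ideal_gen n G"
proof -
  obtain F1 c1 where F1: "finite F1" "F1 \<subseteq> G" "\<forall>g\<in>F1. c1 g \<in> polyring n" "p = (\<Sum>g\<in>F1. c1 g * g)"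
    using assms(1) unfolding ideal_gen_def by blast
  obtain F2 c2 where F2: "finite F2" "F2 \<subseteq> G" "\<forall>g\<in>F2. c2 g \<in> polyring n" "q = (\<Sum>g\<in>F2. c2 g * g)"
    using assms(2) unfolding ideal_gen_def by blast
  define c where "c g = (if g \<in> F1 then c1 g else 0) + (if g \<in> F2 then c2 g else 0)" for g
  have "p + q = (\<Sum>g\<in>F1 \<union> F2. (if g \<in> F1 then c1 g * g else 0))
      + (\<Sum>g\<in>F1 \<union> F2. (if g \<in> F2 then c2 g * g else 0))"
    unfolding F1(4) F2(4) using F1(1) F2(1)
    by (simp add: sum.inter_restrict[symmetric] Int_absorb1 Int_absorb2)
  also have "\<dots> = (\<Sum>g\<in>F1 \<union> F2. c g * g)"
    unfolding c_def distrib_right if_distrib[of "\<lambda>x. x * _"] mult_zero_left by (rule sum.distrib[symmetric])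
  finally have "p + q = (\<Sum>g\<in>F1 \<union> F2. c g * g)" .
  moreover have "\<forall>g\<in>F1 \<union> F2. c g \<in> polyring n"
    using F1(3) F2(3) unfolding c_def by (auto intro!: polyring_add polyring_zero)
  ultimately show ?thesis
    unfolding ideal_gen_def using F1(1,2) F2(1,2)
    by (intro CollectI exI[of _ "F1 \<union> F2"] exI[of _ c]) auto
qed

lemma zero_mem_ideal_gen: "0 \<in> ideal_gen n G"
  unfolding ideal_gen_def by (intro CollectI exI[of _ "{}"]) auto

lemma ideal_gen_sum:
  "(\<And>x. x \<in> X \<Longrightarrow> f x \<in> ideal_gen n G) \<Longrightarrow> sum f X \<in> ideal_gen n G"
  by (induction X rule: infinite_finite_induct) (auto intro: ideal_gen_add zero_mem_ideal_gen)

lemma ideal_gen_subset: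
  assumes J: "is_ideal n J" and G: "G \<subseteq> J"
  shows "ideal_gen n G \<subseteq> J"
proof
  fix p assume "p \<in> ideal_gen n G"
  then obtain F c where "F \<subseteq> G" "\<forall>g\<in>F. c g \<in> polyring n" "p = (\<Sum>g\<in>F. c g * g)"
    unfolding ideal_gen_def by blast
  with J G show "p \<in> J"
    by (auto intro!: is_ideal_sum[OF J] simp: is_ideal_def)
qed

text \<open>Divisibility of monomials is the pointwise order of their exponent functions;
  the order on exponent vectors themselves is lexicographic.\<close>

definition monomial_ideal :: "nat \<Rightarrow> (nat \<Rightarrow>\<^sub>0 nat) set \<Rightarrow> 'a::field mpol set" where
  "monomial_ideal n M =
     {p \<in> polyring n. \<forall>m\<in>Poly_Mapping.keys p. \<exists>a\<in>M. Poly_Mapping.lookup a \<le> Poly_Mapping.lookup m}"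

lemma monomial_ideal_is_ideal: "is_ideal n (monomial_ideal n M :: 'a::field mpol set)"
  unfolding is_ideal_def
proof (intro conjI ballI)
  fix f g :: "'a mpol" assume f: "f \<in> monomial_ideal n M"
  {
    assume "g \<in> monomial_ideal n M"
    with f show "f + g \<in> monomial_ideal n M"
      using keys_add[of f g] unfolding monomial_ideal_def by (auto intro: polyring_add)
  next
    assume g: "g \<in> polyring n"
    have "\<exists>a\<in>M. Poly_Mapping.lookup a \<le> Poly_Mapping.lookup m" if m: "m \<in> Poly_Mapping.keys (g * f)" for m
    proof -
      obtain u v where uv: "m = u + v" "v \<in> Poly_Mapping.keys f"
        using m keys_mult[of g f] by blast
      then obtain a where "a \<in> M" "Poly_Mapping.lookup a \<le> Poly_Mapping.lookup v"
        using f unfolding monomial_ideal_def by blast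
      moreover have "Poly_Mapping.lookup v \<le> Poly_Mapping.lookup m"
        unfolding uv(1) by (simp add: le_fun_def lookup_add)
      ultimately show ?thesis by (blast intro: order_trans)
    qed
    with f g show "g * f \<in> monomial_ideal n M"
      unfolding monomial_ideal_def by (simp add: polyring_mult)
  }
qed (auto simp: monomial_ideal_def polyring_zero)

lemma single_eq_mult_single:
  fixes m a :: "'k \<Rightarrow>\<^sub>0 nat"
  assumes "Poly_Mapping.lookup a \<le> Poly_Mapping.lookup m"
  shows "Poly_Mapping.single m c = Poly_Mapping.single (m - a) c * Poly_Mapping.single a (1::'b::semiring_1)"
proof -
  have "m - a + a = m"
    using assms by (intro poly_mapping_eqI) (simp add: lookup_add lookup_minus le_fun_def)
  then show ?thesis by (simp add: mult_single)
qed

lemma ideal_gen_monomials: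
  assumes "\<And>a. a \<in> M \<Longrightarrow> Poly_Mapping.keys a \<subseteq> {1..n}"
  shows "ideal_gen n ((\<lambda>a. Poly_Mapping.single a 1) ` M) = (monomial_ideal n M :: 'a::field mpol set)"
proof
  have "Poly_Mapping.single a 1 \<in> (monomial_ideal n M :: 'a mpol set)" if "a \<in> M" for a
    using single_in_polyring[OF assms[OF that]] that unfolding monomial_ideal_def by auto
  then show "ideal_gen n ((\<lambda>a. Poly_Mapping.single a 1) ` M) \<subseteq> (monomial_ideal n M :: 'a mpol set)"
    by (intro ideal_gen_subset monomial_ideal_is_ideal) auto
  show "monomial_ideal n M \<subseteq> ideal_gen n ((\<lambda>a. Poly_Mapping.single a (1::'a)) ` M)"
  proof
    fix p :: "'a mpol" assume p: "p \<in> monomial_ideal n M"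
    have "Poly_Mapping.single m (Poly_Mapping.lookup p m) \<in> ideal_gen n ((\<lambda>a. Poly_Mapping.single a 1) ` M)"
      if m: "m \<in> Poly_Mapping.keys p" for m
    proof -
      obtain a where a: "a \<in> M" "Poly_Mapping.lookup a \<le> Poly_Mapping.lookup m"
        using p m unfolding monomial_ideal_def by blast
      have "Poly_Mapping.keys (m - a) \<subseteq> Poly_Mapping.keys m"
        by (auto simp: in_keys_iff lookup_minus)
      then have "Poly_Mapping.keys (m - a) \<subseteq> {1..n}"
        using p m unfolding monomial_ideal_def polyring_def by blast
      then show ?thesis
        unfolding single_eq_mult_single[OF a(2)] using a(1)
        by (intro mult_mem_ideal_gen single_in_polyring) auto
    qed
    then show "p \<in> ideal_gen n ((\<lambda>a. Poly_Mapping.single a 1) ` M)"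
      by (subst poly_mapping_expansion) (rule ideal_gen_sum)
  qed
qed

lemma colon_monomial_ideal_single:
  assumes "Poly_Mapping.keys e \<subseteq> {1..n}"
  shows "colon n (monomial_ideal n M) (Poly_Mapping.single e 1) =
    {p \<in> polyring n. \<forall>m\<in>Poly_Mapping.keys p.
       \<exists>a\<in>M. Poly_Mapping.lookup a \<le> Poly_Mapping.lookup (m + e)}"
  using polyring_mult[OF _ single_in_polyring[OF assms]]
  unfolding colon_def monomial_ideal_def by (auto simp: keys_mult_single)

definition var_ideal :: "nat \<Rightarrow> nat set \<Rightarrow> 'a::field mpol set" where
  "var_ideal n A = monomial_ideal n ((\<lambda>i. Poly_Mapping.single i 1) ` A)"

lemma mem_var_ideal_iff:
  "p \<in> var_ideal n A \<longleftrightarrow>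
     p \<in> polyring n \<and> (\<forall>m\<in>Poly_Mapping.keys p. \<exists>i\<in>A. 0 < Poly_Mapping.lookup m i)"
proof -
  have "Poly_Mapping.lookup (Poly_Mapping.single i 1) \<le> Poly_Mapping.lookup m \<longleftrightarrow> 0 < Poly_Mapping.lookup m i"
    for i and m :: "nat \<Rightarrow>\<^sub>0 nat"
    by (auto simp: le_fun_def lookup_single when_def)
  then show ?thesis unfolding var_ideal_def monomial_ideal_def by auto
qed

lemma var_ideal_split:
  assumes "p \<in> polyring n"
  obtains q r where "p = q + r" "q \<in> var_ideal n A" "r \<in> polyring n"
    "\<forall>m\<in>Poly_Mapping.keys r. \<forall>i\<in>A. Poly_Mapping.lookup m i = 0"
proof -
  define r where
    "r = Poly_Mapping.mapp (\<lambda>m c. if \<forall>i\<in>A. Poly_Mapping.lookup m i = 0 then c else 0) p"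
  have lookup_r: "Poly_Mapping.lookup r m =
      (if \<forall>i\<in>A. Poly_Mapping.lookup m i = 0 then Poly_Mapping.lookup p m else 0)" for m
    unfolding r_def by (auto simp: lookup_mapp in_keys_iff when_def)
  have "Poly_Mapping.keys r \<subseteq> Poly_Mapping.keys p" "Poly_Mapping.keys (p - r) \<subseteq> Poly_Mapping.keys p"
    by (auto simp: in_keys_iff lookup_r lookup_minus split: if_splits)
  with assms have "r \<in> polyring n" "p - r \<in> polyring n"
    unfolding polyring_def by blast+
  moreover have "p - r \<in> var_ideal n A"
    using \<open>p - r \<in> polyring n\<close> by (auto simp: mem_var_ideal_iff in_keys_iff lookup_minus lookup_r split: if_splits)
  moreover have "\<forall>m\<in>Poly_Mapping.keys r. \<forall>i\<in>A. Poly_Mapping.lookup m i = 0"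
    by (auto simp: in_keys_iff lookup_r split: if_splits)
  ultimately show thesis by (intro that[of "p - r" r]) auto
qed

lemma is_prime_ideal_var_ideal: "is_prime_ideal n (var_ideal n A :: 'a::field mpol set)"
  unfolding is_prime_ideal_def
proof (intro conjI ballI impI)
  let ?P = "var_ideal n A :: 'a mpol set"
  show ideal: "is_ideal n ?P" unfolding var_ideal_def by (rule monomial_ideal_is_ideal)
  show "1 \<notin> ?P" by (simp add: mem_var_ideal_iff)
  fix f g :: "'a mpol"
  assume f: "f \<in> polyring n" and g: "g \<in> polyring n" and fg: "f * g \<in> ?P"
  show "f \<in> ?P \<or> g \<in> ?P"
  proof (rule ccontr)
    assume not_in: "\<not> (f \<in> ?P \<or> g \<in> ?P)"
    obtain f1 f2 where f12: "f = f1 + f2" "f1 \<in> ?P" "f2 \<in> polyring n"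
      and f2: "\<forall>m\<in>Poly_Mapping.keys f2. \<forall>i\<in>A. Poly_Mapping.lookup m i = 0"
      using var_ideal_split[OF f] by blast
    obtain g1 g2 where g12: "g = g1 + g2" "g1 \<in> ?P"
      and g2: "\<forall>m\<in>Poly_Mapping.keys g2. \<forall>i\<in>A. Poly_Mapping.lookup m i = 0"
      using var_ideal_split[OF g] by blast
    have "f2 * g2 = f * g - (g * f1 + f2 * g1)"
      unfolding f12(1) g12(1) by (simp add: algebra_simps)
    also have "\<dots> \<in> ?P"
    proof (rule is_ideal_diff[OF ideal fg])
      have "g * f1 \<in> ?P" "f2 * g1 \<in> ?P"
        using ideal f12(2,3) g12(2) g unfolding is_ideal_def by blast+
      with ideal show "g * f1 + f2 * g1 \<in> ?P" unfolding is_ideal_def by blast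
    qed
    finally have in_P: "f2 * g2 \<in> ?P" .
    have "f2 \<noteq> 0" "g2 \<noteq> 0"
      using not_in f12(1,2) g12(1,2) by auto
    then have "f2 * g2 \<noteq> 0" by simp
    then obtain m where m: "m \<in> Poly_Mapping.keys (f2 * g2)" by fastforce
    then obtain u v where "m = u + v" "u \<in> Poly_Mapping.keys f2" "v \<in> Poly_Mapping.keys g2"
      using keys_mult[of f2 g2] by blast
    with f2 g2 have "\<forall>i\<in>A. Poly_Mapping.lookup m i = 0" by (simp add: lookup_add)
    with in_P m show False unfolding mem_var_ideal_iff by fastforce
  qed
qed

section \<open>Associated primes of the edge ideal of a path\<close>

definition path_edges :: "nat \<Rightarrow> (nat \<Rightarrow>\<^sub>0 nat) set" where
  "path_edges n = {Poly_Mapping.single i 1 + Poly_Mapping.single (i + 1) 1 | i. 1 \<le> i \<and> i + 1 \<le> n}"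

lemma path_edge_ideal_eq_monomial_ideal:
  "path_edge_ideal n = (monomial_ideal n (path_edges n) :: 'a::field mpol set)"
proof -
  have "{var i * var (i + 1) | i. 1 \<le> i \<and> i \<le> n - 1} =
      ((\<lambda>a. Poly_Mapping.single a 1) ` path_edges n :: 'a mpol set)"
    unfolding path_edges_def var_def mult_single by force
  moreover have "Poly_Mapping.keys a \<subseteq> {1..n}" if "a \<in> path_edges n" for a
    using that unfolding path_edges_def by (auto simp: keys_add_nat)
  ultimately show ?thesis
    unfolding path_edge_ideal_def by (simp add: ideal_gen_monomials)
qed

lemma path_edge_dvd_iff:
  "(\<exists>a\<in>path_edges n. Poly_Mapping.lookup a \<le> Poly_Mapping.lookup m) \<longleftrightarrow>
     (\<exists>j. 1 \<le> j \<and> j + 1 \<le> n \<and> 0 < Poly_Mapping.lookup m j \<and> 0 < Poly_Mapping.lookup m (j + 1))"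
    (is "?dvd \<longleftrightarrow> ?edge")
proof
  assume ?dvd
  then obtain j where j: "1 \<le> j" "j + 1 \<le> n"
    and le: "\<And>x. Poly_Mapping.lookup (Poly_Mapping.single j 1 + Poly_Mapping.single (j + 1) 1) x
      \<le> Poly_Mapping.lookup m x"
    unfolding path_edges_def le_fun_def by blast
  from le[of j] le[of "j + 1"] j show ?edge
    by (auto simp: lookup_add)
next
  assume ?edge
  then obtain j where j: "1 \<le> j" "j + 1 \<le> n" "0 < Poly_Mapping.lookup m j" "0 < Poly_Mapping.lookup m (j + 1)"
    by blast
  then have "Poly_Mapping.lookup (Poly_Mapping.single j 1 + Poly_Mapping.single (j + 1) 1) \<le> Poly_Mapping.lookup m"
    by (auto simp: le_fun_def lookup_add lookup_single when_def)
  with j show ?dvd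
    unfolding path_edges_def by blast
qed

text \<open>The neighbourhood may contain the non-vertices 0 and n + 1; this is harmless,
  as their variables do not occur in polyring n.\<close>

definition path_nbhd :: "nat set \<Rightarrow> nat set" where
  "path_nbhd S = {i. \<exists>s\<in>S. s = i + 1 \<or> i = s + 1}"

definition path_vertex_cover :: "nat \<Rightarrow> nat set \<Rightarrow> bool" where
  "path_vertex_cover n C \<longleftrightarrow> (\<forall>j. 1 \<le> j \<longrightarrow> j + 1 \<le> n \<longrightarrow> j \<in> C \<or> j + 1 \<in> C)"

text \<open>If the edge dividing x_i m did not contain i, it would divide m.\<close>

lemma mem_path_nbhd_of_var_mult:
  fixes f :: "'a::field mpol"
  assumes f: "f \<in> polyring n" and i: "i \<in> {1..n}" and fi: "f * var i \<in> path_edge_ideal n"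
    and m: "m \<in> Poly_Mapping.keys f"
    and m_free: "\<not> (\<exists>a\<in>path_edges n. Poly_Mapping.lookup a \<le> Poly_Mapping.lookup m)"
  shows "i \<in> path_nbhd (Poly_Mapping.keys m)"
proof -
  have keys_i: "Poly_Mapping.keys (Poly_Mapping.single i (1::nat)) \<subseteq> {1..n}"
    using i by simp
  have "f \<in> colon n (path_edge_ideal n) (var i)"
    using f fi unfolding colon_def by simp
  then have "\<exists>a\<in>path_edges n. Poly_Mapping.lookup a \<le> Poly_Mapping.lookup (m + Poly_Mapping.single i 1)"
    using m unfolding path_edge_ideal_eq_monomial_ideal var_def colon_monomial_ideal_single[OF keys_i]
    by blast
  then obtain j where j: "1 \<le> j" "j + 1 \<le> n"
    "0 < Poly_Mapping.lookup (m + Poly_Mapping.single i 1) j"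
    "0 < Poly_Mapping.lookup (m + Poly_Mapping.single i 1) (j + 1)"
    unfolding path_edge_dvd_iff by blast
  have lookup_mi: "Poly_Mapping.lookup (m + Poly_Mapping.single i 1) x =
      Poly_Mapping.lookup m x + (if i = x then 1 else 0)" for x
    by (simp add: lookup_add lookup_single when_def)
  show ?thesis
  proof (cases "i = j")
    case True
    then have "i + 1 \<in> Poly_Mapping.keys m" using j(4)[unfolded lookup_mi] by (simp add: in_keys_iff)
    then show ?thesis unfolding path_nbhd_def by blast
  next
    case False
    then have "0 < Poly_Mapping.lookup m j" using j(3)[unfolded lookup_mi] by simp
    with m_free j(1,2) j(4)[unfolded lookup_mi] have "i = j + 1"
      unfolding path_edge_dvd_iff by (auto split: if_splits)
    moreover have "j \<in> Poly_Mapping.keys m" using \<open>0 < Poly_Mapping.lookup m j\<close> by (simp add: in_keys_iff)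
    ultimately show ?thesis unfolding path_nbhd_def by blast
  qed
qed

lemma path_vertex_cover_vars_of_prime_colon:
  fixes f :: "'a::field mpol"
  assumes f: "f \<in> polyring n" and prime: "is_prime_ideal n (colon n (path_edge_ideal n) f)"
  shows "path_vertex_cover n {i. var i \<in> colon n (path_edge_ideal n) f}"
  unfolding path_vertex_cover_def
proof (intro allI impI)
  let ?I = "path_edge_ideal n :: 'a mpol set"
  fix j assume j: "1 \<le> j" "j + 1 \<le> n"
  have vars: "(var j :: 'a mpol) \<in> polyring n" "(var (j + 1) :: 'a mpol) \<in> polyring n"
    using j by (auto intro: var_in_polyring)
  have "var j * var (j + 1) \<in> {var i * var (i + 1) | i. 1 \<le> i \<and> i \<le> n - 1}"
    using j by auto
  then have "1 * (var j * var (j + 1)) \<in> ?I"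
    unfolding path_edge_ideal_def by (rule mult_mem_ideal_gen[OF polyring_one])
  moreover have "is_ideal n ?I"
    unfolding path_edge_ideal_eq_monomial_ideal by (rule monomial_ideal_is_ideal)
  ultimately have "f * (var j * var (j + 1)) \<in> ?I"
    using f unfolding is_ideal_def by simp
  moreover have "(var j * var (j + 1) :: 'a mpol) \<in> polyring n"
    using vars by (rule polyring_mult)
  ultimately have "var j * var (j + 1) \<in> colon n ?I f"
    unfolding colon_def by (simp add: mult.commute)
  with prime vars show "j \<in> {i. var i \<in> colon n ?I f} \<or> j + 1 \<in> {i. var i \<in> colon n ?I f}"
    unfolding is_prime_ideal_def by blast
qed

lemma path_vertex_cover_of_prime_colon:
  fixes f :: "'a::field mpol"
  assumes f: "f \<in> polyring n" and prime: "is_prime_ideal n (colon n (path_edge_ideal n) f)"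
  obtains m where "m \<in> Poly_Mapping.keys f" "path_vertex_cover n (path_nbhd (Poly_Mapping.keys m))"
proof -
  let ?I = "path_edge_ideal n :: 'a mpol set"
  have "f \<notin> ?I"
  proof
    assume "f \<in> ?I"
    then have "1 \<in> colon n ?I f" unfolding colon_def by (simp add: polyring_one)
    with prime show False unfolding is_prime_ideal_def by blast
  qed
  then obtain m where m: "m \<in> Poly_Mapping.keys f"
    and m_free: "\<not> (\<exists>a\<in>path_edges n. Poly_Mapping.lookup a \<le> Poly_Mapping.lookup m)"
    using f unfolding path_edge_ideal_eq_monomial_ideal monomial_ideal_def by blast
  have "i \<in> path_nbhd (Poly_Mapping.keys m)" if "var i \<in> colon n ?I f" for i
  proof (rule mem_path_nbhd_of_var_mult[OF f _ _ m m_free])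
    from that have "(var i :: 'a mpol) \<in> polyring n" "var i * f \<in> ?I"
      unfolding colon_def by blast+
    then show "i \<in> {1..n}" "f * var i \<in> ?I"
      unfolding var_def polyring_def by (simp_all add: mult.commute)
  qed
  with path_vertex_cover_vars_of_prime_colon[OF f prime]
  have "path_vertex_cover n (path_nbhd (Poly_Mapping.keys m))"
    unfolding path_vertex_cover_def by blast
  with m show thesis by (rule that)
qed

text \<open>A vertex s can only serve the four edges {j, j+1} with s - 2 \<le> j \<le> s + 1.\<close>

lemma card_ge_of_path_nbhd_cover:
  assumes T: "finite T" and cover: "path_vertex_cover n (path_nbhd T)"
  shows "n - 1 \<le> 4 * card T"
proof -
  have "{1..n - 1} \<subseteq> (\<Union>s\<in>T. {s - 2..s + 1})"
  proof
    fix j assume "j \<in> {1..n - 1}"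
    then have "j \<in> path_nbhd T \<or> j + 1 \<in> path_nbhd T"
      using cover unfolding path_vertex_cover_def by auto
    then obtain s where "s \<in> T" "j \<in> {s - 2..s + 1}"
      unfolding path_nbhd_def by auto
    then show "j \<in> (\<Union>s\<in>T. {s - 2..s + 1})" by blast
  qed
  then have "card {1..n - 1} \<le> card (\<Union>s\<in>T. {s - 2..s + 1})"
    using T by (intro card_mono) auto
  also have "\<dots> \<le> (\<Sum>s\<in>T. card {s - 2..s + 1})"
    using T by (rule card_UN_le)
  also have "\<dots> \<le> (\<Sum>s\<in>T. 4)"
    by (rule sum_mono) simp
  finally show ?thesis by simp
qed

lemma prime_colon_path_edge_ideal_degree:
  fixes f :: "'a::field mpol"
  assumes f: "f \<in> homog_deg n k" and prime: "is_prime_ideal n (colon n (path_edge_ideal n) f)"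
  shows "n - 1 \<le> 4 * k"
proof -
  have "f \<in> polyring n" using f unfolding homog_deg_def by blast
  then obtain m where m: "m \<in> Poly_Mapping.keys f"
    and cover: "path_vertex_cover n (path_nbhd (Poly_Mapping.keys m))"
    using prime by (rule path_vertex_cover_of_prime_colon)
  have "n - 1 \<le> 4 * card (Poly_Mapping.keys m)"
    using cover by (intro card_ge_of_path_nbhd_cover) simp_all
  also have "\<dots> \<le> 4 * mdeg m"
    using card_keys_le_mdeg by simp
  also have "mdeg m = k"
    using f m unfolding homog_deg_def by blast
  finally show ?thesis .
qed

lemma path_edge_dvd_add_set_monomial_iff:
  assumes S: "S \<subseteq> {1..n}" and indep: "\<And>s. s \<in> S \<Longrightarrow> s + 1 \<notin> S"
    and cover: "path_vertex_cover n (path_nbhd S)" and keys_m: "Poly_Mapping.keys m \<subseteq> {1..n}"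
  shows "(\<exists>a\<in>path_edges n. Poly_Mapping.lookup a \<le> Poly_Mapping.lookup (m + set_monomial S))
      \<longleftrightarrow> (\<exists>i\<in>path_nbhd S. 0 < Poly_Mapping.lookup m i)"
proof -
  have fin: "finite S" using S by (rule finite_subset) simp
  have lookup_me: "Poly_Mapping.lookup (m + set_monomial S) x =
      Poly_Mapping.lookup m x + (if x \<in> S then 1 else 0)" for x
    by (simp add: lookup_add lookup_set_monomial[OF fin])
  show ?thesis
  proof
    assume "\<exists>a\<in>path_edges n. Poly_Mapping.lookup a \<le> Poly_Mapping.lookup (m + set_monomial S)"
    then obtain j where j: "1 \<le> j" "j + 1 \<le> n"
      and mj: "0 < Poly_Mapping.lookup (m + set_monomial S) j"
      and mj1: "0 < Poly_Mapping.lookup (m + set_monomial S) (j + 1)"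
      unfolding path_edge_dvd_iff by blast
    note mj = mj[unfolded lookup_me] and mj1 = mj1[unfolded lookup_me]
    show "\<exists>i\<in>path_nbhd S. 0 < Poly_Mapping.lookup m i"
    proof (cases "j \<in> S")
      case True
      then have "j + 1 \<notin> S" by (rule indep)
      then have "0 < Poly_Mapping.lookup m (j + 1)" using mj1 by simp
      moreover have "j + 1 \<in> path_nbhd S" using True unfolding path_nbhd_def by blast
      ultimately show ?thesis by blast
    next
      case False
      then have "0 < Poly_Mapping.lookup m j" using mj by simp
      moreover have "j \<in> path_nbhd S \<or> 0 < Poly_Mapping.lookup m (j + 1)"
        using mj1 unfolding path_nbhd_def by (cases "j + 1 \<in> S") auto
      moreover have "j \<in> path_nbhd S \<or> j + 1 \<in> path_nbhd S"
        using cover j unfolding path_vertex_cover_def by blast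
      ultimately show ?thesis by blast
    qed
  next
    assume "\<exists>i\<in>path_nbhd S. 0 < Poly_Mapping.lookup m i"
    then obtain i s where i: "0 < Poly_Mapping.lookup m i" and s: "s \<in> S" "s = i + 1 \<or> i = s + 1"
      unfolding path_nbhd_def by blast
    have "i \<in> Poly_Mapping.keys m" using i by (simp add: in_keys_iff)
    then have "i \<in> {1..n}" "s \<in> {1..n}" using keys_m s(1) S by blast+
    moreover have pos: "0 < Poly_Mapping.lookup (m + set_monomial S) x" if "x = i \<or> x = s" for x
      using that i s(1) by (auto simp: lookup_me)
    ultimately have "\<exists>j. 1 \<le> j \<and> j + 1 \<le> n \<and>
        0 < Poly_Mapping.lookup (m + set_monomial S) j \<and> 0 < Poly_Mapping.lookup (m + set_monomial S) (j + 1)"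
      using s(2) by (elim disjE) (metis atLeastAtMost_iff pos)+
    then show "\<exists>a\<in>path_edges n. Poly_Mapping.lookup a \<le> Poly_Mapping.lookup (m + set_monomial S)"
      unfolding path_edge_dvd_iff .
  qed
qed

lemma colon_path_edge_ideal_prod_var:
  assumes S: "S \<subseteq> {1..n}" and indep: "\<And>s. s \<in> S \<Longrightarrow> s + 1 \<notin> S"
    and cover: "path_vertex_cover n (path_nbhd S)"
  shows "colon n (path_edge_ideal n) (\<Prod>s\<in>S. var s) = (var_ideal n (path_nbhd S) :: 'a::field mpol set)"
proof -
  have fin: "finite S" using S by (rule finite_subset) simp
  then have "Poly_Mapping.keys (set_monomial S) \<subseteq> {1..n}"
    using S by (simp add: keys_set_monomial)
  then have "colon n (path_edge_ideal n) (\<Prod>s\<in>S. var s) =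
      {p :: 'a mpol. p \<in> polyring n \<and> (\<forall>m\<in>Poly_Mapping.keys p. \<exists>a\<in>path_edges n.
        Poly_Mapping.lookup a \<le> Poly_Mapping.lookup (m + set_monomial S))}"
    unfolding prod_var[OF fin] path_edge_ideal_eq_monomial_ideal by (rule colon_monomial_ideal_single)
  also have "\<dots> = var_ideal n (path_nbhd S)"
  proof (intro set_eqI)
    fix p :: "'a mpol"
    have "Poly_Mapping.keys m \<subseteq> {1..n}" if "p \<in> polyring n" "m \<in> Poly_Mapping.keys p" for m
      using that unfolding polyring_def by blast
    with path_edge_dvd_add_set_monomial_iff[OF S indep cover]
    show "p \<in> {p. p \<in> polyring n \<and> (\<forall>m\<in>Poly_Mapping.keys p. \<exists>a\<in>path_edges n.
        Poly_Mapping.lookup a \<le> Poly_Mapping.lookup (m + set_monomial S))} \<longleftrightarrow> p \<in> var_ideal n (path_nbhd S)"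
      unfolding mem_var_ideal_iff mem_Collect_eq by blast
  qed
  finally show ?thesis .
qed

text \<open>Every fourth vertex 3, 7, 11, ..., and also the last vertex when n \<equiv> 2 (mod 4),
  so that the last edge is covered.\<close>

definition path_v_witness :: "nat \<Rightarrow> nat set" where
  "path_v_witness n = {s \<in> {1..n}. s mod 4 = 3 \<or> (s = n \<and> n mod 4 = 2)}"

lemma path_v_witness_independent: "s \<in> path_v_witness n \<Longrightarrow> s + 1 \<notin> path_v_witness n"
  unfolding path_v_witness_def mem_Collect_eq atLeastAtMost_iff by presburger

lemma path_vertex_cover_nbhd_path_v_witness: "path_vertex_cover n (path_nbhd (path_v_witness n))"
  unfolding path_vertex_cover_def
proof (intro allI impI)
  fix j assume j: "1 \<le> j" "j + 1 \<le> n"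
  have "j mod 4 = 0 \<or> j mod 4 = 1 \<or> j mod 4 = 2 \<or> j mod 4 = 3" by presburger
  then obtain s where "s \<in> path_v_witness n" "s + 1 = j \<or> s = j + 1 \<or> s = j \<or> s = j + 2"
  proof (elim disjE)
    assume j0: "j mod 4 = 0"
    obtain s where s: "j = s + 1" using j(1) by (metis add.commute le_Suc_ex)
    with j0 have "s mod 4 = 3" by presburger
    with j s show thesis by (intro that[of s]) (auto simp: path_v_witness_def)
  next
    assume j1: "j mod 4 = 1"
    show thesis
    proof (cases "j + 2 \<le> n")
      case True
      moreover have "(j + 2) mod 4 = 3" using j1 by presburger
      ultimately show thesis by (intro that[of "j + 2"]) (auto simp: path_v_witness_def)
    next
      case False
      then have "n = j + 1" using j(2) by simp
      moreover have "(j + 1) mod 4 = 2" using j1 by presburger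
      ultimately show thesis using j by (intro that[of n]) (auto simp: path_v_witness_def)
    qed
  next
    assume "j mod 4 = 2"
    then have "(j + 1) mod 4 = 3" by presburger
    with j show thesis by (intro that[of "j + 1"]) (auto simp: path_v_witness_def)
  next
    assume "j mod 4 = 3"
    with j show thesis by (intro that[of j]) (auto simp: path_v_witness_def)
  qed
  then show "j \<in> path_nbhd (path_v_witness n) \<or> j + 1 \<in> path_nbhd (path_v_witness n)"
    unfolding path_nbhd_def by auto
qed

lemma card_three_mod_four: "card {s \<in> {1..n}. s mod 4 = (3::nat)} = (n + 1) div 4"
proof (induction n)
  case (Suc n)
  let ?A = "\<lambda>n. {s \<in> {1..n}. s mod 4 = (3::nat)}"
  have fin: "finite (?A n)" by simp
  show ?case
  proof (cases "Suc n mod 4 = 3")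
    case True
    then have "?A (Suc n) = insert (Suc n) (?A n)"
      using le_Suc_eq by auto
    then have "card (?A (Suc n)) = card (?A n) + 1"
      using fin by simp
    with Suc.IH True show ?thesis by presburger
  next
    case False
    then have "?A (Suc n) = ?A n"
      using le_Suc_eq by auto
    with Suc.IH False show ?thesis by presburger
  qed
qed simp

lemma card_path_v_witness: "card (path_v_witness n) = (n + 2) div 4"
proof (cases "n mod 4 = 2")
  case True
  then have "path_v_witness n = insert n {s \<in> {1..n}. s mod 4 = 3}"
    unfolding path_v_witness_def by auto
  then have "card (path_v_witness n) = (n + 1) div 4 + 1"
    using True card_three_mod_four[of n] by simp
  with True show ?thesis by presburger
next
  case False
  then have "path_v_witness n = {s \<in> {1..n}. s mod 4 = 3}"
    unfolding path_v_witness_def by auto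
  then have "card (path_v_witness n) = (n + 1) div 4"
    using card_three_mod_four[of n] by simp
  with False show ?thesis by presburger
qed

lemma path_edge_ideal_prime_colon_exists:
  "\<exists>f \<in> homog_deg n ((n + 2) div 4). \<exists>P \<in> Ass n (path_edge_ideal n :: 'a::field mpol set).
     colon n (path_edge_ideal n) f = P"
proof -
  let ?S = "path_v_witness n"
  let ?P = "var_ideal n (path_nbhd ?S) :: 'a mpol set"
  have S: "?S \<subseteq> {1..n}" unfolding path_v_witness_def by blast
  have f: "(\<Prod>s\<in>?S. var s) \<in> homog_deg n ((n + 2) div 4)"
    using prod_var_in_homog_deg[OF S] unfolding card_path_v_witness .
  have colon: "colon n (path_edge_ideal n) (\<Prod>s\<in>?S. var s) = ?P"
    using S path_v_witness_independent path_vertex_cover_nbhd_path_v_witness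
    by (rule colon_path_edge_ideal_prod_var)
  have "?P \<in> Ass n (path_edge_ideal n)"
    using f colon is_prime_ideal_var_ideal unfolding Ass_def homog_deg_def by blast
  with f colon show ?thesis by blast
qed

lemma path_edge_ideal_prime_colon_degree_ge:
  assumes "\<exists>f \<in> homog_deg n k. \<exists>P \<in> Ass n (path_edge_ideal n :: 'a::field mpol set).
     colon n (path_edge_ideal n) f = P"
  shows "(n + 2) div 4 \<le> k"
proof -
  from assms obtain f :: "'a mpol" and P where f: "f \<in> homog_deg n k"
    and "P \<in> Ass n (path_edge_ideal n)" "colon n (path_edge_ideal n) f = P"
    by blast
  then have "is_prime_ideal n (colon n (path_edge_ideal n) f)" unfolding Ass_def by simp
  with f have "n - 1 \<le> 4 * k" by (rule prime_colon_path_edge_ideal_degree)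
  then have "n + 2 < (k + 1) * 4" by arith
  then show ?thesis using less_mult_imp_div_less by fastforce
qed

theorem theorem3p1:
  fixes n :: nat
  assumes "n \<ge> 1"
  shows "v_number n (path_edge_ideal n :: 'a::field mpol set) =
           (if n mod 4 = 0 \<or> n mod 4 = 1 then n div 4 else n div 4 + 1)"
proof -
  have "v_number n (path_edge_ideal n :: 'a mpol set) = (n + 2) div 4"
    unfolding v_number_def
    using path_edge_ideal_prime_colon_exists path_edge_ideal_prime_colon_degree_ge
    by (rule Least_equality)
  moreover have "(n + 2) div 4 = (if n mod 4 = 0 \<or> n mod 4 = 1 then n div 4 else n div 4 + 1)"
    by (cases "n mod 4 = 0 \<or> n mod 4 = 1") (simp_all, presburger+)
  ultimately show ?thesis by simp
qed

end
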